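(* Let $d\in\{3,4,5\}$. There exists $\delta>0$ such that for all $(\alpha,p)\in\Omega_{d,\delta}:=[d-2-\delta,d-2+\delta]\times[2,2+\delta]$ and all $u\in\mathbb{X}_d$, the operators $V_{u,\alpha,p}$ and $\mathcal{A}_{u,\alpha,p}$ are bounded linear operators from $\mathbb{X}_d$ to $L^2_{rad}(\mathbb{R}^d)$.
   Context: $\mathbb{X}_d:=L^2_{rad}(\mathbb{R}^d)\cap L^{10}_{rad}(\mathbb{R}^d)$ (radial functions) with norm $\|u\|_{L^2}+\|u\|_{L^{10}}$. $V_{u,\alpha,p}$ is the multiplication operator by the function $(|\cdot|^{-\alpha}*|u|^p)|u|^{p-2}$, and $\mathcal{A}_{u,\alpha,p}\xi:=\big(|\cdot|^{-\alpha}*(|u|^{p-2}u\xi)\big)|u|^{p-2}u$. *)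

theory Defs
  imports "HOL-Analysis.Analysis"
begin

text \<open>Functions on R^d are modelled as real-valued functions on real^'n (d = CARD('n)),
  with Lebesgue measure. Membership in function spaces is up to a.e. equality.\<close>

definition radial_ae :: "('a::euclidean_space \<Rightarrow> real) \<Rightarrow> bool" where
  "radial_ae f \<longleftrightarrow> (\<exists>g. (\<forall>x y. norm x = norm y \<longrightarrow> g x = g y) \<and>
                        (AE x in lebesgue. f x = g x))"

definition memLp :: "real \<Rightarrow> ('a::euclidean_space \<Rightarrow> real) \<Rightarrow> bool" where
  "memLp q f \<longleftrightarrow> f \<in> borel_measurable lebesgue \<and> integrable lebesgue (\<lambda>x. \<bar>f x\<bar> powr q)"

definition Lp_norm :: "real \<Rightarrow> ('a::euclidean_space \<Rightarrow> real) \<Rightarrow> real" where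
  "Lp_norm q f = (LINT x|lebesgue. \<bar>f x\<bar> powr q) powr (1 / q)"

definition L2rad :: "('a::euclidean_space \<Rightarrow> real) set" where
  "L2rad = {f. memLp 2 f \<and> radial_ae f}"

definition Xd :: "('a::euclidean_space \<Rightarrow> real) set" where
  "Xd = {f. memLp 2 f \<and> memLp 10 f \<and> radial_ae f}"

definition Xnorm :: "('a::euclidean_space \<Rightarrow> real) \<Rightarrow> real" where
  "Xnorm f = Lp_norm 2 f + Lp_norm 10 f"

text \<open>|t|^a with the convention |t|^0 = 1 (also at t = 0).\<close>
definition abspow :: "real \<Rightarrow> real \<Rightarrow> real" where
  "abspow t a = (if a = 0 then 1 else \<bar>t\<bar> powr a)"

definition rconv :: "real \<Rightarrow> ('a::euclidean_space \<Rightarrow> real) \<Rightarrow> 'a \<Rightarrow> real" where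
  "rconv \<alpha> f x = (LINT y|lebesgue. norm (x - y) powr (- \<alpha>) * f y)"

definition V_op :: "('a::euclidean_space \<Rightarrow> real) \<Rightarrow> real \<Rightarrow> real \<Rightarrow> ('a \<Rightarrow> real) \<Rightarrow> 'a \<Rightarrow> real" where
  "V_op u \<alpha> p \<xi> x = rconv \<alpha> (\<lambda>y. abspow (u y) p) x * abspow (u x) (p - 2) * \<xi> x"

definition A_op :: "('a::euclidean_space \<Rightarrow> real) \<Rightarrow> real \<Rightarrow> real \<Rightarrow> ('a \<Rightarrow> real) \<Rightarrow> 'a \<Rightarrow> real" where
  "A_op u \<alpha> p \<xi> x = rconv \<alpha> (\<lambda>y. abspow (u y) (p - 2) * u y * \<xi> y) x * (abspow (u x) (p - 2) * u x)"

definition bounded_linear_X_L2rad :: "(('a::euclidean_space \<Rightarrow> real) \<Rightarrow> ('a \<Rightarrow> real)) \<Rightarrow> bool" where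
  "bounded_linear_X_L2rad T \<longleftrightarrow>
     (\<forall>\<xi>\<in>Xd. T \<xi> \<in> L2rad) \<and>
     (\<forall>\<xi>\<in>Xd. \<forall>\<eta>\<in>Xd. \<forall>a b::real.
        AE x in lebesgue. T (\<lambda>y. a * \<xi> y + b * \<eta> y) x = a * T \<xi> x + b * T \<eta> x) \<and>
     (\<exists>C. \<forall>\<xi>\<in>Xd. Lp_norm 2 (T \<xi>) \<le> C * Xnorm \<xi>)"

end

theory Submission
  imports Defs
begin

text \<open>Young's inequality splits the kernel pointwise,
  \<open>|z|\<^sup>-\<^sup>\<alpha> |f| \<le> |f| + |f|\<^sup>4 + 1\<^bsub>|z| < 1\<^esub> |z|\<^sup>-\<^sup>4\<^sup>\<alpha>\<^sup>/\<^sup>3\<close>, and the last term is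
  integrable because \<open>4\<alpha>/3 < d\<close> for \<open>\<alpha>\<close> near \<open>d - 2\<close>. Hence \<open>|\<cdot>|\<^sup>-\<^sup>\<alpha> * F\<close> is bounded by
  \<open>\<integral>G\<close> plus a constant whenever \<open>|F| + |F|\<^sup>4 \<le> G\<close> with \<open>G\<close> integrable. For \<open>p\<close> close to 2 this
  applies to \<open>F = |u|\<^sup>p\<close> and \<open>F = |u|\<^sup>p\<^sup>-\<^sup>2 u \<xi>\<close>, since every power \<open>|t|\<^sup>e\<close> with
  \<open>2 \<le> e \<le> 10\<close> is dominated by \<open>|t|\<^sup>2 + |t|\<^sup>1\<^sup>0\<close>; the same domination makes the remaining
  factors \<open>|u|\<^sup>p\<^sup>-\<^sup>2 \<xi>\<close> and \<open>|u|\<^sup>p\<^sup>-\<^sup>2 u\<close> square integrable. The convolutions are radial because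
  Lebesgue measure is invariant under orthogonal maps.\<close>

section \<open>Rotation invariance of Lebesgue measure\<close>

lemma borel_measurable_linear:
  fixes f :: "'a::euclidean_space \<Rightarrow> 'b::euclidean_space"
  assumes "linear f"
  shows "f \<in> borel_measurable borel"
  using assms by (intro borel_measurable_continuous_onI linear_continuous_on)
    (simp add: linear_conv_bounded_linear)

lemma lborel_distr_orthogonal_wellorder:
  fixes Q :: "real^'m::{finite,wellorder} \<Rightarrow> real^'m::_"
  assumes Q: "orthogonal_transformation Q"
  shows "distr lborel borel Q = lborel"
proof (rule lborel_eqI[symmetric])
  have lin: "linear Q" using Q orthogonal_transformation_linear by blast
  have Qi: "orthogonal_transformation (inv Q)" using Q orthogonal_transformation_inv by blast
  fix l u :: "real^'m::_" assume le: "\<And>b. b \<in> Basis \<Longrightarrow> l \<bullet> b \<le> u \<bullet> b"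
  have pre: "Q -` box l u = inv Q ` box l u"
    using Q orthogonal_transformation_bij bij_vimage_eq_inv_image by blast
  have "open (Q -` box l u)"
    using lin by (intro open_vimage open_box linear_continuous_on) (simp add: linear_conv_bounded_linear)
  then have "emeasure (distr lborel borel Q) (box l u) = emeasure lebesgue (inv Q ` box l u)"
    using borel_measurable_linear[OF lin] pre by (subst emeasure_distr) auto
  also have "\<dots> = ennreal (measure lebesgue (box l u))"
    using measurable_orthogonal_image[OF Qi] measure_orthogonal_image[OF Qi, of "box l u"]
    by (simp add: emeasure_eq_measure2)
  also have "\<dots> = ennreal (\<Prod>b\<in>Basis. (u - l) \<bullet> b)"
    using emeasure_lborel_box[OF le] by (simp add: emeasure_eq_measure2)
  finally show "emeasure (distr lborel borel Q) (box l u) = (\<Prod>b\<in>Basis. (u - l) \<bullet> b)" .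
qed simp

lemma Basis_vec_eq_range_axis: "(Basis :: (real^'n) set) = range (\<lambda>i. axis i 1)"
  by (auto simp: Basis_vec_def)

lemma prod_Basis_vec: "(\<Prod>b\<in>Basis. (x::real^'n) \<bullet> b) = (\<Prod>i\<in>UNIV. x $ i)"
proof -
  have "inj (\<lambda>i::'n. axis i (1::real))" by (auto intro: injI simp: axis_eq_axis)
  then show ?thesis unfolding Basis_vec_eq_range_axis
    by (subst prod.reindex) (simp_all add: inner_axis)
qed

lemma linear_vec_reindex: "linear (\<lambda>y::real^'n. (\<chi> i. y $ \<sigma> i) :: real^'m)"
  by (auto simp: linear_iff vec_eq_iff)

lemma norm_vec_reindex:
  fixes \<sigma> :: "'m::finite \<Rightarrow> 'n::finite"
  assumes "bij \<sigma>"
  shows "norm ((\<chi> i. y $ \<sigma> i) :: real^'m) = norm (y::real^'n)"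
  using sum.reindex_bij_betw[of \<sigma> UNIV UNIV "\<lambda>j. (norm (y $ j))\<^sup>2"] assms
  unfolding norm_vec_def L2_set_def by (simp add: bij_def)

lemma lborel_distr_vec_reindex:
  fixes \<sigma> :: "'m::finite \<Rightarrow> 'n::finite"
  assumes bij: "bij \<sigma>"
  shows "distr lborel borel (\<lambda>y::real^'n. (\<chi> i. y $ \<sigma> i) :: real^'m) = lborel"
proof (rule lborel_eqI[symmetric])
  let ?P = "\<lambda>y::real^'n. (\<chi> i. y $ \<sigma> i) :: real^'m"
  fix l u :: "real^'m" assume le: "\<And>b. b \<in> Basis \<Longrightarrow> l \<bullet> b \<le> u \<bullet> b"
  let ?l = "(\<chi> j. l $ inv \<sigma> j) :: real^'n" and ?u = "(\<chi> j. u $ inv \<sigma> j) :: real^'n"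
  have "(\<forall>i. l $ i < y $ \<sigma> i \<and> y $ \<sigma> i < u $ i) \<longleftrightarrow> (\<forall>j. ?l $ j < y $ j \<and> y $ j < ?u $ j)"
    for y :: "real^'n"
    using bij by (simp, metis bij_inv_eq_iff)
  then have pre: "?P -` box l u = box ?l ?u" by (auto simp: mem_box_cart)
  have "l $ i \<le> u $ i" for i
    using le[of "axis i 1"] by (auto simp: Basis_vec_eq_range_axis inner_axis)
  then have le': "\<And>b. b \<in> Basis \<Longrightarrow> ?l \<bullet> b \<le> ?u \<bullet> b"
    by (auto simp: Basis_vec_eq_range_axis inner_axis)
  have "emeasure (distr lborel borel ?P) (box l u) = ennreal (\<Prod>j\<in>UNIV. u $ inv \<sigma> j - l $ inv \<sigma> j)"
    using borel_measurable_linear[OF linear_vec_reindex] emeasure_lborel_box[OF le']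
    by (subst emeasure_distr) (auto simp: pre prod_Basis_vec)
  also have "(\<Prod>j\<in>UNIV. u $ inv \<sigma> j - l $ inv \<sigma> j) = (\<Prod>i\<in>UNIV. u $ i - l $ i)"
    using prod.reindex_bij_betw[OF bij_imp_bij_inv[OF bij], of "\<lambda>i. u $ i - l $ i"] by simp
  finally show "emeasure (distr lborel borel ?P) (box l u) = (\<Prod>b\<in>Basis. (u - l) \<bullet> b)"
    by (simp add: prod_Basis_vec)
qed simp

text \<open>The library's change of variables requires a well-ordered index type, so an orthogonal
  map of \<^typ>\<open>real^'n\<close> is conjugated by a coordinate permutation to one of \<^typ>\<open>real^'m\<close>
  with \<^typ>\<open>'m\<close> well-ordered of the same cardinality; for the dimensions needed below,
  \<^typ>\<open>'m\<close> is a numeral type.\<close>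

lemma lborel_distr_orthogonal_card_eq:
  fixes Q :: "real^'n \<Rightarrow> real^'n"
  assumes Q: "orthogonal_transformation Q" and card: "CARD('m::{finite,wellorder}) = CARD('n)"
  shows "distr lborel borel Q = lborel"
proof -
  obtain \<sigma> :: "'m \<Rightarrow> 'n" where "bij_betw \<sigma> UNIV UNIV"
    using finite_same_card_bij[of "UNIV::'m set" "UNIV::'n set"] card by auto
  then have bij: "bij \<sigma>" by (simp add: bij_def)
  then have bij_inv: "bij (inv \<sigma>)" by (rule bij_imp_bij_inv)
  define P where "P = (\<lambda>y::real^'n. (\<chi> i. y $ \<sigma> i) :: real^'m::_)"
  define P' where "P' = (\<lambda>z::real^'m::_. (\<chi> j. z $ inv \<sigma> j) :: real^'n)"
  define Q' where "Q' = P \<circ> Q \<circ> P'"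
  have P'P: "P' (P y) = y" for y
    using bij by (simp add: P_def P'_def vec_eq_iff bij_is_surj surj_f_inv_f)
  have linQ: "linear Q" using Q orthogonal_transformation_linear by blast
  have "orthogonal_transformation Q'"
    unfolding orthogonal_transformation Q'_def P_def P'_def
    using Q norm_vec_reindex[OF bij] norm_vec_reindex[OF bij_inv]
    by (auto intro!: linear_compose linear_vec_reindex linQ simp: orthogonal_transformation)
  then have "distr lborel borel Q' = lborel" "Q' \<in> borel_measurable borel"
    by (simp_all add: lborel_distr_orthogonal_wellorder borel_measurable_linear
        orthogonal_transformation_linear)
  moreover have "P \<in> borel_measurable borel" "P' \<in> borel_measurable borel"
    unfolding P_def P'_def by (simp_all add: borel_measurable_linear linear_vec_reindex)
  moreover have "Q = P' \<circ> (Q' \<circ> P)" by (auto simp: Q'_def P'P)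
  ultimately have "distr lborel borel Q = distr (distr (distr lborel borel P) borel Q') borel P'"
    by (simp add: distr_distr measurable_comp)
  then show ?thesis
    using \<open>distr lborel borel Q' = lborel\<close> unfolding P_def P'_def
    by (simp add: lborel_distr_vec_reindex bij bij_inv)
qed

lemma lborel_distr_orthogonal:
  fixes Q :: "real^'n \<Rightarrow> real^'n"
  assumes "orthogonal_transformation Q" and "CARD('n) \<in> {3, 4, 5}"
  shows "distr lborel borel Q = lborel"
proof -
  consider "CARD('n) = CARD(3)" | "CARD('n) = CARD(4)" | "CARD('n) = CARD(5)"
    using assms(2) by auto
  then show ?thesis
    by cases (metis assms(1) lborel_distr_orthogonal_card_eq)+
qed

section \<open>Radial functions and convolution\<close>

definition radial :: "('a::real_normed_vector \<Rightarrow> 'b) \<Rightarrow> bool" where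
  "radial g \<longleftrightarrow> (\<forall>x y. norm x = norm y \<longrightarrow> g x = g y)"

lemma radial_ae_iff: "radial_ae f \<longleftrightarrow> (\<exists>g. radial g \<and> (AE x in lebesgue. f x = g x))"
  by (simp add: radial_ae_def radial_def)

lemma radial_imp_radial_ae: "radial f \<Longrightarrow> radial_ae f"
  unfolding radial_ae_iff by (intro exI[of _ f]) simp

lemma radial_ae_comp2:
  assumes "radial_ae f" and "radial_ae g"
  shows "radial_ae (\<lambda>x. h (f x) (g x))"
proof -
  obtain f' g' where "radial f'" "radial g'"
    and f_f': "AE x in lebesgue. f x = f' x" and g_g': "AE x in lebesgue. g x = g' x"
    using assms unfolding radial_ae_iff by blast
  have "AE x in lebesgue. h (f x) (g x) = h (f' x) (g' x)"
    using f_f' g_g' by eventually_elim simp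
  moreover have "radial (\<lambda>x. h (f' x) (g' x))"
    using \<open>radial f'\<close> \<open>radial g'\<close> unfolding radial_def by metis
  ultimately show ?thesis unfolding radial_ae_iff by blast
qed

lemma radial_ae_comp: "radial_ae f \<Longrightarrow> radial_ae (\<lambda>x. h (f x))"
  using radial_ae_comp2[of f f "\<lambda>a b. h a"] by simp

lemma borel_measurable_lebesgue_kernel[measurable]:
  "(\<lambda>y::'a::euclidean_space. norm (x - y) powr a) \<in> borel_measurable lebesgue"
  by (rule measurable_completion) simp

lemma pred_in_ball[measurable]:
  assumes "f \<in> M \<rightarrow>\<^sub>M borel"
  shows "Measurable.pred M (\<lambda>x. (f x :: 'a::euclidean_space) \<in> ball c r)"
proof -
  have "Measurable.pred borel (\<lambda>x::'a. x \<in> ball c r)" by (simp add: pred_def)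
  then show ?thesis using measurable_compose[OF assms] by blast
qed

lemma radial_lborel_conv:
  fixes F g :: "real^'n \<Rightarrow> real"
  assumes card: "CARD('n) \<in> {3, 4, 5}" and F[measurable]: "F \<in> borel_measurable borel"
    and "AE y in lborel. F y = g y" and "radial g"
  shows "radial (\<lambda>x. \<integral>y. norm (x - y) powr (-\<alpha>) * F y \<partial>lborel)"
  unfolding radial_def
proof (intro allI impI)
  fix x x' :: "real^'n" assume "norm x = norm x'"
  then obtain Q where Q: "orthogonal_transformation Q" and Qx: "Q x = x'"
    using orthogonal_transformation_exists by metis
  have lin: "linear Q" and norm_Q: "\<And>v. norm (Q v) = norm v"
    using Q by (auto simp: orthogonal_transformation)
  have distr_Q: "distr lborel borel Q = lborel" by (rule lborel_distr_orthogonal[OF Q card])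
  have [measurable]: "Q \<in> borel_measurable borel" by (rule borel_measurable_linear[OF lin])
  have "AE z in distr lborel borel Q. F z = g z"
    using assms(3) unfolding distr_Q .
  then have "AE z in lborel. F (Q z) = g (Q z)"
    by (rule AE_distrD[rotated]) simp
  then have F_Q: "AE z in lborel. F (Q z) = F z"
    using assms(3) by eventually_elim (metis \<open>radial g\<close>[unfolded radial_def] norm_Q)
  then have F_Q': "AE z in lborel.
      norm (Q x - Q z) powr (-\<alpha>) * F (Q z) = norm (x - z) powr (-\<alpha>) * F z"
    by eventually_elim (simp add: linear_diff[OF lin, symmetric] norm_Q)
  have "(\<integral>y. norm (x' - y) powr (-\<alpha>) * F y \<partial>lborel)
      = (\<integral>y. norm (Q x - y) powr (-\<alpha>) * F y \<partial>distr lborel borel Q)"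
    by (simp add: distr_Q Qx)
  also have "\<dots> = (\<integral>z. norm (Q x - Q z) powr (-\<alpha>) * F (Q z) \<partial>lborel)"
    by (rule integral_distr) simp_all
  also have "\<dots> = (\<integral>z. norm (x - z) powr (-\<alpha>) * F z \<partial>lborel)"
    using F_Q' by (intro integral_cong_AE) simp_all
  finally show "(\<integral>y. norm (x - y) powr (-\<alpha>) * F y \<partial>lborel)
      = (\<integral>y. norm (x' - y) powr (-\<alpha>) * F y \<partial>lborel)"
    by simp
qed

lemma rconv_eq_lborel_integral:
  fixes F F' :: "'a::euclidean_space \<Rightarrow> real"
  assumes [measurable]: "F \<in> borel_measurable lebesgue" "F' \<in> borel_measurable borel"
    and "AE y in lborel. F y = F' y"
  shows "rconv \<alpha> F x = (\<integral>y. norm (x - y) powr (-\<alpha>) * F' y \<partial>lborel)"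
proof -
  have [measurable]: "F' \<in> borel_measurable lebesgue" by (rule measurable_completion) simp
  have "AE y in lebesgue. norm (x - y) powr (-\<alpha>) * F y = norm (x - y) powr (-\<alpha>) * F' y"
    using AE_completion[OF assms(3)] by eventually_elim simp
  then have "rconv \<alpha> F x = (\<integral>y. norm (x - y) powr (-\<alpha>) * F' y \<partial>lebesgue)"
    unfolding rconv_def by (intro integral_cong_AE) simp_all
  also have "\<dots> = (\<integral>y. norm (x - y) powr (-\<alpha>) * F' y \<partial>lborel)"
    by (rule integral_completion) simp
  finally show ?thesis .
qed

lemma borel_measurable_rconv:
  fixes F :: "'a::euclidean_space \<Rightarrow> real"
  assumes "F \<in> borel_measurable lebesgue"
  shows "rconv \<alpha> F \<in> borel_measurable lebesgue"
proof -
  obtain F' where [measurable]: "F' \<in> borel_measurable borel" and "AE y in lborel. F y = F' y"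
    using completion_ex_borel_measurable_real[OF assms] by auto
  then have "rconv \<alpha> F = (\<lambda>x. \<integral>y. norm (x - y) powr (-\<alpha>) * F' y \<partial>lborel)"
    using assms by (intro ext rconv_eq_lborel_integral) simp_all
  also have "\<dots> \<in> borel_measurable lebesgue"
    by (intro measurable_completion lborel.borel_measurable_lebesgue_integral) simp
  finally show ?thesis .
qed

lemma radial_rconv:
  fixes F :: "real^'n \<Rightarrow> real"
  assumes card: "CARD('n) \<in> {3, 4, 5}" and F: "F \<in> borel_measurable lebesgue"
    and "radial_ae F"
  shows "radial (rconv \<alpha> F)"
proof -
  obtain F' where F': "F' \<in> borel_measurable borel" and F_F': "AE y in lborel. F y = F' y"
    using completion_ex_borel_measurable_real[OF F] by auto
  obtain g where g: "radial g" and F_g: "AE x in lebesgue. F x = g x"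
    using assms(3) unfolding radial_ae_iff by blast
  have "AE y in lborel. F' y = g y"
    using F_F' F_g[unfolded AE_completion_iff] by eventually_elim simp
  moreover have "rconv \<alpha> F = (\<lambda>x. \<integral>y. norm (x - y) powr (-\<alpha>) * F' y \<partial>lborel)"
    using F F' F_F' by (intro ext rconv_eq_lborel_integral)
  ultimately show ?thesis
    using radial_lborel_conv[OF card F' _ g] by simp
qed

section \<open>Boundedness of the Riesz potential on \<open>L\<^sup>1 \<inter> L\<^sup>4\<close>\<close>

lemma ex_power_half_bracket:
  fixes r :: real
  assumes "0 < r" "r < 1"
  shows "\<exists>k. (1/2) ^ Suc k \<le> r \<and> r < (1/2) ^ k"
proof -
  obtain n where n: "(1/2::real) ^ n < r" using real_arch_pow_inv[of r "1/2"] assms by auto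
  define N where "N = (LEAST n. (1/2::real) ^ n \<le> r)"
  have N: "(1/2::real) ^ N \<le> r" unfolding N_def by (rule LeastI[of _ n]) (use n in simp)
  have "N \<noteq> 0" using N assms(2) by (intro notI) simp
  then obtain k where k: "N = Suc k" using not0_implies_Suc by blast
  have "\<not> (1/2::real) ^ k \<le> r"
    using not_less_Least[of k "\<lambda>n. (1/2::real) ^ n \<le> r"] k N_def by simp
  then show ?thesis using N k by (auto intro!: exI[of _ k])
qed

lemma power_half_powr_neg:
  "((1/2::real) ^ Suc k) powr (-\<beta>) = 2 powr ((real k + 1) * \<beta>)"
proof -
  have "2 powr (- (real k + 1)) = 1 / 2 powr (real k + 1)" by (rule powr_minus_divide)
  also have "2 powr (real k + 1) = 2 ^ Suc k" by (simp add: powr_add powr_realpow)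
  finally have half: "(1/2::real) ^ Suc k = 2 powr (- (real k + 1))" by (simp add: power_one_over)
  show ?thesis unfolding half powr_powr by (simp add: algebra_simps)
qed

lemma ennreal_norm_powr_le_suminf_balls:
  fixes z :: "'a::euclidean_space"
  assumes "0 \<le> \<beta>"
  shows "ennreal (indicator (ball 0 1) z * norm z powr (-\<beta>))
    \<le> (\<Sum>k. ennreal (2 powr ((real k + 1) * \<beta>)) * indicator (ball 0 ((1/2) ^ k)) z)"
    (is "_ \<le> suminf ?F")
proof (cases "z \<in> ball 0 1 \<and> z \<noteq> 0")
  case True
  then obtain k where k: "(1/2) ^ Suc k \<le> norm z" "norm z < (1/2) ^ k"
    using ex_power_half_bracket[of "norm z"] by auto
  have "norm z powr (-\<beta>) \<le> ((1/2) ^ Suc k) powr (-\<beta>)"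
    using k(1) assms by (intro powr_mono2') auto
  then have "norm z powr (-\<beta>) \<le> 2 powr ((real k + 1) * \<beta>)"
    by (simp only: power_half_powr_neg)
  then have "ennreal (indicator (ball 0 1) z * norm z powr (-\<beta>)) \<le> ?F k"
    using True k(2) by (simp add: ennreal_leI)
  also have "\<dots> \<le> (\<Sum>i<Suc k. ?F i)" by (rule member_le_sum) auto
  also have "\<dots> \<le> suminf ?F" by (rule sum_le_suminf) (auto simp: summableI)
  finally show ?thesis .
qed auto

lemma integrable_ball_norm_powr:
  fixes \<beta> :: real
  assumes "0 \<le> \<beta>" and "\<beta> < DIM('a::euclidean_space)"
  shows "integrable lborel (\<lambda>z::'a. indicator (ball 0 1) z * norm z powr (-\<beta>))"
proof (rule integrableI_bounded)
  define V where "V = unit_ball_vol (real DIM('a))"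
  define q where "q = 2 powr \<beta> / 2 ^ DIM('a)"
  have "q < 1"
    using assms powr_less_mono[of \<beta> "real DIM('a)" 2] by (simp add: q_def powr_realpow)
  have "(\<integral>\<^sup>+z. ennreal (norm (indicator (ball 0 1) z * norm (z::'a) powr (-\<beta>))) \<partial>lborel)
      \<le> (\<integral>\<^sup>+z. (\<Sum>k. ennreal (2 powr ((real k + 1) * \<beta>)) * indicator (ball (0::'a) ((1/2) ^ k)) z) \<partial>lborel)"
    by (rule nn_integral_mono) (use ennreal_norm_powr_le_suminf_balls[OF assms(1)] in simp)
  also have "\<dots> = (\<Sum>k. ennreal (2 powr ((real k + 1) * \<beta>)) * emeasure lborel (ball (0::'a) ((1/2) ^ k)))"
    by (subst nn_integral_suminf) (simp_all add: nn_integral_cmult_indicator)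
  also have "\<dots> = (\<Sum>k. ennreal (2 powr \<beta> * V * q ^ k))"
  proof (intro suminf_cong)
    fix k
    have "(2 powr \<beta>) ^ k = 2 powr (\<beta> * real k)"
      by (simp add: powr_realpow[symmetric] powr_powr)
    then have "2 powr ((real k + 1) * \<beta>) = 2 powr \<beta> * (2 powr \<beta>) ^ k"
      by (simp add: powr_add[symmetric] algebra_simps)
    moreover have "((1/2::real) ^ k) ^ DIM('a) = (1 / 2 ^ DIM('a)) ^ k"
      by (simp add: power_mult[symmetric] mult.commute power_one_over)
    ultimately have "2 powr ((real k + 1) * \<beta>) * (V * ((1/2) ^ k) ^ DIM('a)) = 2 powr \<beta> * V * q ^ k"
      by (simp add: q_def power_divide algebra_simps)
    moreover have "ennreal (2 powr ((real k + 1) * \<beta>)) * emeasure lborel (ball (0::'a) ((1/2) ^ k))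
        = ennreal (2 powr ((real k + 1) * \<beta>) * (V * ((1/2) ^ k) ^ DIM('a)))"
      by (simp add: emeasure_ball V_def ennreal_mult)
    ultimately show "ennreal (2 powr ((real k + 1) * \<beta>)) * emeasure lborel (ball (0::'a) ((1/2) ^ k))
        = ennreal (2 powr \<beta> * V * q ^ k)"
      by (simp only:)
  qed
  also have "\<dots> = ennreal (\<Sum>k. 2 powr \<beta> * V * q ^ k)"
    using \<open>q < 1\<close> by (intro suminf_ennreal2) (auto simp: V_def q_def intro!: summable_mult)
  also have "\<dots> < \<infinity>" by simp
  finally show "(\<integral>\<^sup>+z. ennreal (norm (indicator (ball 0 1) z * norm (z::'a) powr (-\<beta>))) \<partial>lborel) < \<infinity>" .
qed simp

lemma mult_le_powr_add_powr:
  fixes a b p q :: real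
  assumes "0 \<le> a" "0 \<le> b" "1 < p" "1 < q" "1/p + 1/q = 1"
  shows "a * b \<le> a powr p + b powr q"
proof -
  have "a * b \<le> a powr p / p + b powr q / q" using assms by (intro Youngs_inequality)
  also have "\<dots> \<le> a powr p + b powr q"
    using assms by (intro add_mono) (simp_all add: divide_le_eq mult_le_cancel_left1)
  finally show ?thesis .
qed

lemma norm_powr_mult_le:
  fixes z :: "'a::euclidean_space"
  assumes "0 < \<alpha>"
  shows "\<bar>norm z powr (-\<alpha>) * f\<bar> \<le> \<bar>f\<bar> + \<bar>f\<bar> powr 4 + indicator (ball 0 1) z * norm z powr (-(4/3 * \<alpha>))"
proof -
  consider "z = 0" | "1 \<le> norm z" | "z \<noteq> 0" "norm z < 1" by fastforce
  then show ?thesis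
  proof cases
    case 2
    then have "norm z powr (-\<alpha>) \<le> 1"
      using assms powr_mono[of "-\<alpha>" 0 "norm z"] by (auto split: if_splits)
    then show ?thesis
      by (simp add: abs_mult mult_left_le_one_le add_increasing2)
  next
    case 3
    have "norm z powr (-\<alpha>) * \<bar>f\<bar> \<le> (norm z powr (-\<alpha>)) powr (4/3) + \<bar>f\<bar> powr 4"
      by (rule mult_le_powr_add_powr) auto
    also have "(norm z powr (-\<alpha>)) powr (4/3) = norm z powr (-(4/3 * \<alpha>))"
      unfolding powr_powr by (simp add: algebra_simps)
    finally show ?thesis
      using 3 abs_ge_zero[of f] by (simp add: abs_mult)
  qed simp
qed

lemma lborel_distr_reflect: "distr lborel borel (\<lambda>y. x - y) = (lborel :: 'a::euclidean_space measure)"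
  using lborel_affine[of "-1::real" x] by (simp add: density_1)

lemma integrable_lebesgue_reflect:
  fixes h :: "'a::euclidean_space \<Rightarrow> real"
  assumes [measurable]: "h \<in> borel_measurable borel" and "integrable lborel h"
  shows "integrable lebesgue (\<lambda>y. h (x - y))"
    and "(\<integral>y. h (x - y) \<partial>lebesgue) = (\<integral>z. h z \<partial>lborel)"
proof -
  have "integrable lborel (\<lambda>y. h (x - y))"
    using integrable_distr_eq[of "\<lambda>y. x - y" lborel borel h] assms(2)
    by (simp add: lborel_distr_reflect)
  then show "integrable lebesgue (\<lambda>y. h (x - y))"
    by (simp add: integrable_completion)
  have "(\<integral>y. h (x - y) \<partial>lborel) = (\<integral>z. h z \<partial>lborel)"
    using integral_distr[of "\<lambda>y. x - y" lborel borel h] by (simp add: lborel_distr_reflect)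
  then show "(\<integral>y. h (x - y) \<partial>lebesgue) = (\<integral>z. h z \<partial>lborel)"
    by (simp add: integral_completion)
qed

lemma rconv_bounded:
  fixes F G :: "'a::euclidean_space \<Rightarrow> real"
  assumes \<alpha>: "0 < \<alpha>" "4/3 * \<alpha> < DIM('a)"
    and [measurable]: "F \<in> borel_measurable lebesgue" and G: "integrable lebesgue G"
    and dom: "\<And>y. \<bar>F y\<bar> + \<bar>F y\<bar> powr 4 \<le> G y"
  shows "integrable lebesgue (\<lambda>y. norm (x - y) powr (-\<alpha>) * F y)"
    and "\<bar>rconv \<alpha> F x\<bar>
      \<le> (\<integral>y. G y \<partial>lebesgue) + (\<integral>z. indicator (ball 0 1) z * norm (z::'a) powr (-(4/3 * \<alpha>)) \<partial>lborel)"
proof -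
  define h where "h = (\<lambda>z::'a. indicator (ball 0 1) z * norm z powr (-(4/3 * \<alpha>)))"
  have [measurable]: "h \<in> borel_measurable borel" unfolding h_def by measurable
  have "integrable lborel h"
    unfolding h_def using \<alpha> by (intro integrable_ball_norm_powr) auto
  note h_x = integrable_lebesgue_reflect[OF \<open>h \<in> borel_measurable borel\<close> this, of x]
  have bound: "\<bar>norm (x - y) powr (-\<alpha>) * F y\<bar> \<le> G y + h (x - y)" for y
    using norm_powr_mult_le[OF \<alpha>(1), of "x - y" "F y"] dom[of y] unfolding h_def by simp
  have G_h: "integrable lebesgue (\<lambda>y. G y + h (x - y))" using G h_x(1) by simp
  show integrable: "integrable lebesgue (\<lambda>y. norm (x - y) powr (-\<alpha>) * F y)"
  proof (rule Bochner_Integration.integrable_bound[OF G_h])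
    show "AE y in lebesgue. norm (norm (x - y) powr (-\<alpha>) * F y) \<le> norm (G y + h (x - y))"
      using bound by (intro AE_I2) (metis order_trans abs_ge_self real_norm_def)
  qed measurable
  have "\<bar>rconv \<alpha> F x\<bar> \<le> (\<integral>y. \<bar>norm (x - y) powr (-\<alpha>) * F y\<bar> \<partial>lebesgue)"
    unfolding rconv_def by (rule integral_abs_bound)
  also have "\<dots> \<le> (\<integral>y. G y + h (x - y) \<partial>lebesgue)"
    using integrable G_h bound by (intro integral_mono) auto
  also have "\<dots> = (\<integral>y. G y \<partial>lebesgue) + (\<integral>z. h z \<partial>lborel)"
    using G h_x by simp
  finally show "\<bar>rconv \<alpha> F x\<bar>
      \<le> (\<integral>y. G y \<partial>lebesgue) + (\<integral>z. indicator (ball 0 1) z * norm (z::'a) powr (-(4/3 * \<alpha>)) \<partial>lborel)"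
    unfolding h_def .
qed

lemma rconv_linear:
  assumes "integrable lebesgue (\<lambda>y. norm (x - y) powr (-\<alpha>) * F y)"
    and "integrable lebesgue (\<lambda>y. norm (x - y) powr (-\<alpha>) * F' y)"
  shows "rconv \<alpha> (\<lambda>y. a * F y + b * F' y) x = a * rconv \<alpha> F x + b * rconv \<alpha> F' x"
  using assms by (simp add: rconv_def distrib_left mult.left_commute)

lemma rconv_cmult: "rconv \<alpha> (\<lambda>y. c * F y) x = c * rconv \<alpha> F x"
  unfolding rconv_def by (simp add: mult.left_commute)

section \<open>Bounded operators from \<open>X\<^sub>d\<close> to \<open>L\<^sup>2\<^sub>r\<^sub>a\<^sub>d\<close>\<close>

lemma Lp_norm_nonneg: "0 \<le> Lp_norm q f"
  unfolding Lp_norm_def by simp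

lemma integral_abs_powr_nonneg: "0 \<le> (\<integral>x. \<bar>f x :: real\<bar> powr q \<partial>M)"
  by (intro integral_nonneg_AE AE_I2) simp

lemma Lp_norm_cmult:
  assumes "0 < q"
  shows "Lp_norm q (\<lambda>x. c * f x) = \<bar>c\<bar> * Lp_norm q f"
proof -
  have "Lp_norm q (\<lambda>x. c * f x) = (\<bar>c\<bar> powr q * (\<integral>x. \<bar>f x\<bar> powr q \<partial>lebesgue)) powr (1/q)"
    unfolding Lp_norm_def by (simp add: abs_mult powr_mult)
  also have "\<dots> = \<bar>c\<bar> * Lp_norm q f"
    using assms integral_abs_powr_nonneg
    by (simp add: Lp_norm_def powr_mult powr_powr)
  finally show ?thesis .
qed

lemma integral_abs_powr_le_1:
  assumes "0 < q" and "Lp_norm q f \<le> 1"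
  shows "(\<integral>x. \<bar>f x\<bar> powr q \<partial>lebesgue) \<le> 1"
proof -
  define I where "I = (\<integral>x. \<bar>f x\<bar> powr q \<partial>lebesgue)"
  have "I = (I powr (1/q)) powr q"
    using assms(1) integral_abs_powr_nonneg[where f=f and q=q and M=lebesgue]
    by (simp add: I_def powr_powr)
  also have "\<dots> \<le> 1 powr q"
    using assms by (intro powr_mono2) (auto simp: Lp_norm_def I_def)
  finally show ?thesis unfolding I_def by simp
qed

lemma memLp_cmult:
  assumes "memLp q f"
  shows "memLp q (\<lambda>x. c * f x)"
proof -
  have [measurable]: "f \<in> borel_measurable lebesgue"
    and "integrable lebesgue (\<lambda>x. \<bar>c\<bar> powr q * \<bar>f x\<bar> powr q)"
    using assms by (simp_all add: memLp_def)
  then show ?thesis by (simp add: memLp_def abs_mult powr_mult)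
qed

lemma Xd_cmult: "\<xi> \<in> Xd \<Longrightarrow> (\<lambda>x. c * \<xi> x) \<in> Xd"
  unfolding Xd_def by (auto intro: memLp_cmult radial_ae_comp)

lemma Xnorm_cmult: "Xnorm (\<lambda>x. c * \<xi> x) = \<bar>c\<bar> * Xnorm \<xi>"
  unfolding Xnorm_def by (simp add: Lp_norm_cmult algebra_simps)

lemma Xnorm_nonneg: "0 \<le> Xnorm \<xi>"
  unfolding Xnorm_def by (intro add_nonneg_nonneg Lp_norm_nonneg)

lemma XdD:
  assumes "\<xi> \<in> Xd"
  shows "\<xi> \<in> borel_measurable lebesgue" "integrable lebesgue (\<lambda>x. \<bar>\<xi> x\<bar> powr 2)"
    "integrable lebesgue (\<lambda>x. \<bar>\<xi> x\<bar> powr 10)" "radial_ae \<xi>"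
  using assms unfolding Xd_def memLp_def by auto

lemma Xnorm_le_1_integral_le_1:
  assumes "Xnorm \<xi> \<le> 1"
  shows "(\<integral>x. \<bar>\<xi> x\<bar> powr 2 \<partial>lebesgue) \<le> 1" "(\<integral>x. \<bar>\<xi> x\<bar> powr 10 \<partial>lebesgue) \<le> 1"
proof -
  have "Lp_norm 2 \<xi> \<le> 1" "Lp_norm 10 \<xi> \<le> 1"
    using assms Lp_norm_nonneg[of 2 \<xi>] Lp_norm_nonneg[of 10 \<xi>] unfolding Xnorm_def by linarith+
  then show "(\<integral>x. \<bar>\<xi> x\<bar> powr 2 \<partial>lebesgue) \<le> 1" "(\<integral>x. \<bar>\<xi> x\<bar> powr 10 \<partial>lebesgue) \<le> 1"
    by (simp_all only: integral_abs_powr_le_1 zero_less_numeral)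
qed

lemma memLp_2_dominated:
  fixes f g :: "'a::euclidean_space \<Rightarrow> real"
  assumes "f \<in> borel_measurable lebesgue" and "integrable lebesgue g"
    and "\<And>x. \<bar>f x\<bar> powr 2 \<le> g x" and "(\<integral>x. g x \<partial>lebesgue) \<le> B"
  shows "memLp 2 f \<and> Lp_norm 2 f \<le> sqrt B"
proof
  have integrable: "integrable lebesgue (\<lambda>x. \<bar>f x\<bar> powr 2)"
    using assms(1,3) by (intro Bochner_Integration.integrable_bound[OF assms(2)] AE_I2)
      (auto intro: order_trans[OF _ abs_ge_self])
  then show "memLp 2 f" using assms(1) by (simp add: memLp_def)
  have "(\<integral>x. \<bar>f x\<bar> powr 2 \<partial>lebesgue) \<le> B"
    using integrable assms by (intro order_trans[OF integral_mono assms(4)]) auto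
  then show "Lp_norm 2 f \<le> sqrt B"
    using integral_abs_powr_nonneg[where f=f and q=2 and M=lebesgue]
    by (simp add: Lp_norm_def powr_half_sqrt real_sqrt_le_mono)
qed

text \<open>The estimates below are not homogeneous in \<open>\<xi>\<close>, so boundedness is first established
  on the unit ball of \<open>X\<^sub>d\<close> and then transported by scaling.\<close>

lemma bounded_linear_X_L2radI:
  fixes T :: "('a::euclidean_space \<Rightarrow> real) \<Rightarrow> 'a \<Rightarrow> real"
  assumes radial: "\<And>\<xi>. \<xi> \<in> Xd \<Longrightarrow> radial_ae (T \<xi>)"
    and linear: "\<And>\<xi> \<eta> a b. \<xi> \<in> Xd \<Longrightarrow> \<eta> \<in> Xd \<Longrightarrow>
      AE x in lebesgue. T (\<lambda>y. a * \<xi> y + b * \<eta> y) x = a * T \<xi> x + b * T \<eta> x"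
    and homogeneous: "\<And>\<xi> c. \<xi> \<in> Xd \<Longrightarrow> T (\<lambda>y. c * \<xi> y) = (\<lambda>x. c * T \<xi> x)"
    and unit_ball: "\<And>\<xi>. \<xi> \<in> Xd \<Longrightarrow> Xnorm \<xi> \<le> 1 \<Longrightarrow> memLp 2 (T \<xi>) \<and> Lp_norm 2 (T \<xi>) \<le> C"
  shows "bounded_linear_X_L2rad T"
proof -
  have bound: "memLp 2 (T \<xi>) \<and> Lp_norm 2 (T \<xi>) \<le> max C 0 * Xnorm \<xi>" if \<xi>: "\<xi> \<in> Xd" for \<xi>
  proof (cases "Xnorm \<xi> = 0")
    case True
    have scaled: "\<bar>c\<bar> * Lp_norm 2 (T \<xi>) \<le> C" for c
      using unit_ball[OF Xd_cmult[OF \<xi>], of c] True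
      by (simp add: Xnorm_cmult homogeneous[OF \<xi>] Lp_norm_cmult)
    have "Lp_norm 2 (T \<xi>) \<le> 0"
    proof (rule ccontr)
      assume "\<not> Lp_norm 2 (T \<xi>) \<le> 0"
      then show False
        using scaled[of "(\<bar>C\<bar> + 1) / Lp_norm 2 (T \<xi>)"] by simp
    qed
    then show ?thesis using unit_ball[OF \<xi>] True by simp
  next
    case False
    define N where "N = Xnorm \<xi>"
    have N: "0 < N" using False Xnorm_nonneg[of \<xi>] by (simp add: N_def)
    define \<eta> where "\<eta> = (\<lambda>x. (1/N) * \<xi> x)"
    have \<eta>: "\<eta> \<in> Xd" "Xnorm \<eta> = 1"
      using Xd_cmult[OF \<xi>, of "1/N"] N unfolding \<eta>_def Xnorm_cmult by (simp_all add: N_def)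
    have "\<xi> = (\<lambda>x. N * \<eta> x)" using N by (simp add: \<eta>_def)
    then have T_\<xi>: "T \<xi> = (\<lambda>x. N * T \<eta> x)" using homogeneous[OF \<eta>(1)] by simp
    have "Lp_norm 2 (T \<eta>) \<le> max C 0"
      using unit_ball[OF \<eta>(1)] \<eta>(2) by (simp add: le_max_iff_disj)
    then have "N * Lp_norm 2 (T \<eta>) \<le> max C 0 * N"
      using mult_left_mono[of _ _ N] N by (simp add: mult.commute)
    then show ?thesis
      using unit_ball[OF \<eta>(1)] \<eta>(2) N
      by (simp add: T_\<xi> memLp_cmult Lp_norm_cmult N_def)
  qed
  show ?thesis
    unfolding bounded_linear_X_L2rad_def L2rad_def using bound radial linear by blast
qed

lemma abs_powr_2: "\<bar>t::real\<bar> powr 2 = t\<^sup>2"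
  by (cases "t = 0") (simp_all add: powr_numeral)

lemma abs_powr_le_powr_2_add_powr_10:
  fixes t e :: real
  assumes "2 \<le> e" "e \<le> 10"
  shows "\<bar>t\<bar> powr e \<le> \<bar>t\<bar> powr 2 + \<bar>t\<bar> powr 10"
proof (cases "\<bar>t\<bar> \<le> 1")
  case True
  then have "\<bar>t\<bar> powr e \<le> \<bar>t\<bar> powr 2" using assms by (intro powr_mono') auto
  then show ?thesis using powr_ge_zero[of "\<bar>t\<bar>" 10] by linarith
next
  case False
  then have "\<bar>t\<bar> powr e \<le> \<bar>t\<bar> powr 10" using assms by (intro powr_mono) auto
  then show ?thesis using powr_ge_zero[of "\<bar>t\<bar>" 2] by linarith
qed

lemma abs_abspow_mult_self:
  fixes s t :: real
  assumes "0 \<le> s"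
  shows "\<bar>abspow t s * t\<bar> = \<bar>t\<bar> powr (1 + s)"
  using assms by (cases "s = 0") (simp_all add: abspow_def abs_mult powr_add)

lemma borel_measurable_abspow[measurable]:
  "f \<in> borel_measurable M \<Longrightarrow> (\<lambda>x. abspow (f x) a) \<in> borel_measurable M"
  by (cases "a = 0") (simp_all add: abspow_def measurable_abs_powr)

lemma abspow_L1_L4_bound:
  fixes p t :: real
  assumes "2 \<le> p" "p \<le> 5/2"
  shows "\<bar>abspow t p\<bar> + \<bar>abspow t p\<bar> powr 4 \<le> 2 * (\<bar>t\<bar> powr 2 + \<bar>t\<bar> powr 10)"
proof -
  have "\<bar>t\<bar> powr p \<le> \<bar>t\<bar> powr 2 + \<bar>t\<bar> powr 10"
    using assms by (intro abs_powr_le_powr_2_add_powr_10) auto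
  moreover have "(\<bar>t\<bar> powr p) powr 4 \<le> \<bar>t\<bar> powr 2 + \<bar>t\<bar> powr 10"
    unfolding powr_powr using assms by (intro abs_powr_le_powr_2_add_powr_10) auto
  ultimately show ?thesis using assms by (simp add: abspow_def)
qed

lemma abspow_mult_square_le:
  fixes s t w :: real
  assumes "0 \<le> s" "s \<le> 1/2"
  shows "(abspow t s * w)\<^sup>2 \<le> \<bar>t\<bar> powr 2 + \<bar>w\<bar> powr 2 + \<bar>w\<bar> powr 10"
proof (cases "s = 0")
  case True
  then show ?thesis
    using powr_ge_zero[of "\<bar>t\<bar>" 2] powr_ge_zero[of "\<bar>w\<bar>" 10] by (simp add: abspow_def abs_powr_2)
next
  case False
  then have s: "0 < s" using assms by simp
  have "(\<bar>t\<bar> powr s)\<^sup>2 = \<bar>t\<bar> powr (2 * s)"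
    using s by (cases "t = 0") (simp_all add: powr_realpow[symmetric] powr_powr mult.commute)
  then have "(abspow t s * w)\<^sup>2 = \<bar>t\<bar> powr (2 * s) * \<bar>w\<bar> powr 2"
    using s by (simp add: abspow_def power_mult_distrib abs_powr_2)
  also have "\<dots> \<le> (\<bar>t\<bar> powr (2 * s)) powr (1/s) + (\<bar>w\<bar> powr 2) powr (1/(1 - s))"
    using s assms by (intro mult_le_powr_add_powr) (auto simp: field_simps)
  also have "(\<bar>t\<bar> powr (2 * s)) powr (1/s) = \<bar>t\<bar> powr 2"
    using s by (simp add: powr_powr)
  also have "(\<bar>w\<bar> powr 2) powr (1/(1 - s)) = \<bar>w\<bar> powr (2/(1 - s))"
    unfolding powr_powr by simp
  also have "\<bar>w\<bar> powr (2/(1 - s)) \<le> \<bar>w\<bar> powr 2 + \<bar>w\<bar> powr 10"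
    using s assms by (intro abs_powr_le_powr_2_add_powr_10) (auto simp: field_simps)
  finally show ?thesis by simp
qed

lemma abspow_mult_self_square_le:
  fixes s t :: real
  assumes "0 \<le> s" "s \<le> 4"
  shows "(abspow t s * t)\<^sup>2 \<le> \<bar>t\<bar> powr 2 + \<bar>t\<bar> powr 10"
proof -
  have "(abspow t s * t)\<^sup>2 = \<bar>t\<bar> powr (2 + 2 * s)"
    unfolding abs_powr_2[symmetric] abs_abspow_mult_self[OF assms(1)] powr_powr
    by (simp add: algebra_simps)
  also have "\<dots> \<le> \<bar>t\<bar> powr 2 + \<bar>t\<bar> powr 10"
    using assms by (intro abs_powr_le_powr_2_add_powr_10) auto
  finally show ?thesis .
qed

lemma abspow_mult_self_mult_L1_L4_bound:
  fixes s t w :: real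
  assumes "0 \<le> s" "s \<le> 1/4"
  shows "\<bar>abspow t s * t * w\<bar> + \<bar>abspow t s * t * w\<bar> powr 4
    \<le> 2 * (\<bar>t\<bar> powr 2 + \<bar>t\<bar> powr 10 + \<bar>w\<bar> powr 2 + \<bar>w\<bar> powr 10)"
proof -
  define a where "a = \<bar>t\<bar> powr (1 + s)"
  have "a * \<bar>w\<bar> \<le> a powr 2 + \<bar>w\<bar> powr 2"
    by (rule mult_le_powr_add_powr) (auto simp: a_def)
  also have "a powr 2 \<le> \<bar>t\<bar> powr 2 + \<bar>t\<bar> powr 10"
    unfolding a_def powr_powr using assms by (intro abs_powr_le_powr_2_add_powr_10) auto
  finally have L1: "a * \<bar>w\<bar> \<le> \<bar>t\<bar> powr 2 + \<bar>t\<bar> powr 10 + \<bar>w\<bar> powr 2" by simp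
  have "(a * \<bar>w\<bar>) powr 4 = a powr 4 * \<bar>w\<bar> powr 4" by (simp add: powr_mult)
  also have "\<dots> \<le> (a powr 4) powr 2 + (\<bar>w\<bar> powr 4) powr 2"
    by (rule mult_le_powr_add_powr) auto
  also have "(a powr 4) powr 2 \<le> \<bar>t\<bar> powr 2 + \<bar>t\<bar> powr 10"
    unfolding a_def powr_powr using assms by (intro abs_powr_le_powr_2_add_powr_10) auto
  also have "(\<bar>w\<bar> powr 4) powr 2 \<le> \<bar>w\<bar> powr 2 + \<bar>w\<bar> powr 10"
    unfolding powr_powr by (intro abs_powr_le_powr_2_add_powr_10) auto
  finally have L4: "(a * \<bar>w\<bar>) powr 4 \<le> \<bar>t\<bar> powr 2 + \<bar>t\<bar> powr 10 + \<bar>w\<bar> powr 2 + \<bar>w\<bar> powr 10"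
    by simp
  have "\<bar>abspow t s * t * w\<bar> = a * \<bar>w\<bar>"
    unfolding a_def abs_mult[of _ w] abs_abspow_mult_self[OF assms(1)] ..
  then show ?thesis
    using L1 L4 powr_ge_zero[of "\<bar>w\<bar>" 10] by (simp only:) (smt (verit))
qed

section \<open>The operators \<open>V\<close> and \<open>\<A>\<close>\<close>

lemma rconv_abspow_bounded:
  fixes u :: "real^'n \<Rightarrow> real"
  assumes \<alpha>: "0 < \<alpha>" "4/3 * \<alpha> < CARD('n)" and p: "2 \<le> p" "p \<le> 5/2" and u: "u \<in> Xd"
  obtains M where "\<And>x. \<bar>rconv \<alpha> (\<lambda>y. abspow (u y) p) x\<bar> \<le> M"
proof
  have [measurable]: "u \<in> borel_measurable lebesgue" by (rule XdD(1)[OF u])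
  show "\<bar>rconv \<alpha> (\<lambda>y. abspow (u y) p) x\<bar>
      \<le> (\<integral>y. 2 * (\<bar>u y\<bar> powr 2 + \<bar>u y\<bar> powr 10) \<partial>lebesgue)
        + (\<integral>z. indicator (ball 0 1) z * norm (z::real^'n) powr (-(4/3 * \<alpha>)) \<partial>lborel)" for x
    using \<alpha> XdD(2,3)[OF u] abspow_L1_L4_bound[OF p]
    by (intro rconv_bounded(2)) simp_all
qed

lemma rconv_abspow_mult_bounded:
  fixes u \<xi> :: "real^'n \<Rightarrow> real"
  assumes \<alpha>: "0 < \<alpha>" "4/3 * \<alpha> < CARD('n)" and s: "0 \<le> s" "s \<le> 1/4"
    and u: "u \<in> Xd" and \<xi>: "\<xi> \<in> Xd"
  defines "F \<equiv> \<lambda>y. abspow (u y) s * u y * \<xi> y"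
  shows "integrable lebesgue (\<lambda>y. norm (x - y) powr (-\<alpha>) * F y)"
    and "\<bar>rconv \<alpha> F x\<bar>
      \<le> (\<integral>y. 2 * (\<bar>u y\<bar> powr 2 + \<bar>u y\<bar> powr 10 + \<bar>\<xi> y\<bar> powr 2 + \<bar>\<xi> y\<bar> powr 10) \<partial>lebesgue)
        + (\<integral>z. indicator (ball 0 1) z * norm (z::real^'n) powr (-(4/3 * \<alpha>)) \<partial>lborel)"
proof -
  have [measurable]: "u \<in> borel_measurable lebesgue" "\<xi> \<in> borel_measurable lebesgue"
    using XdD(1) u \<xi> by blast+
  have "F \<in> borel_measurable lebesgue" unfolding F_def by measurable
  moreover have "integrable lebesgue
      (\<lambda>y. 2 * (\<bar>u y\<bar> powr 2 + \<bar>u y\<bar> powr 10 + \<bar>\<xi> y\<bar> powr 2 + \<bar>\<xi> y\<bar> powr 10))"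
    using XdD(2,3)[OF u] XdD(2,3)[OF \<xi>] by simp
  moreover have "\<bar>F y\<bar> + \<bar>F y\<bar> powr 4
      \<le> 2 * (\<bar>u y\<bar> powr 2 + \<bar>u y\<bar> powr 10 + \<bar>\<xi> y\<bar> powr 2 + \<bar>\<xi> y\<bar> powr 10)" for y
    unfolding F_def by (rule abspow_mult_self_mult_L1_L4_bound[OF s])
  moreover have "4/3 * \<alpha> < DIM(real^'n)" using \<alpha> by simp
  ultimately show "integrable lebesgue (\<lambda>y. norm (x - y) powr (-\<alpha>) * F y)"
    and "\<bar>rconv \<alpha> F x\<bar>
      \<le> (\<integral>y. 2 * (\<bar>u y\<bar> powr 2 + \<bar>u y\<bar> powr 10 + \<bar>\<xi> y\<bar> powr 2 + \<bar>\<xi> y\<bar> powr 10) \<partial>lebesgue)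
        + (\<integral>z. indicator (ball 0 1) z * norm (z::real^'n) powr (-(4/3 * \<alpha>)) \<partial>lborel)"
    using rconv_bounded[OF \<alpha>(1)] by blast+
qed

lemma bounded_linear_V_op:
  fixes u :: "real^'n \<Rightarrow> real"
  assumes card: "CARD('n) \<in> {3, 4, 5}" and \<alpha>: "0 < \<alpha>" "4/3 * \<alpha> < CARD('n)"
    and p: "2 \<le> p" "p \<le> 5/2" and u: "u \<in> Xd"
  shows "bounded_linear_X_L2rad (V_op u \<alpha> p)"
proof -
  note u_facts = XdD[OF u]
  have [measurable]: "u \<in> borel_measurable lebesgue" by (rule u_facts(1))
  define W where "W = rconv \<alpha> (\<lambda>y. abspow (u y) p)"
  obtain M where W_le: "\<And>x. \<bar>W x\<bar> \<le> M"
    using rconv_abspow_bounded[OF \<alpha> p u] unfolding W_def by blast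
  have [measurable]: "W \<in> borel_measurable lebesgue"
    unfolding W_def by (intro borel_measurable_rconv) simp
  have "radial W"
    unfolding W_def using card _ radial_ae_comp[OF u_facts(4), of "\<lambda>t. abspow t p"]
    by (rule radial_rconv) simp
  define s where "s = p - 2"
  have s: "0 \<le> s" "s \<le> 1/2" using p by (simp_all add: s_def)
  have V_eq: "V_op u \<alpha> p \<xi> = (\<lambda>x. W x * abspow (u x) s * \<xi> x)" for \<xi>
    by (simp add: fun_eq_iff V_op_def W_def s_def)
  show ?thesis
  proof (rule bounded_linear_X_L2radI)
    fix \<xi> :: "real^'n \<Rightarrow> real" assume \<xi>: "\<xi> \<in> Xd"
    have "radial_ae (\<lambda>x. W x * abspow (u x) s)"
      using radial_imp_radial_ae[OF \<open>radial W\<close>] u_facts(4)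
      by (rule radial_ae_comp2[where h = "\<lambda>w t. w * abspow t s"])
    then show "radial_ae (V_op u \<alpha> p \<xi>)"
      unfolding V_eq using XdD(4)[OF \<xi>] by (rule radial_ae_comp2[where h = "(*)"])
    assume "Xnorm \<xi> \<le> 1"
    note \<xi>_facts = XdD[OF \<xi>] Xnorm_le_1_integral_le_1[OF this]
    have [measurable]: "\<xi> \<in> borel_measurable lebesgue" by (rule \<xi>_facts(1))
    define Iu where "Iu = (\<integral>x. \<bar>u x\<bar> powr 2 \<partial>lebesgue)"
    show "memLp 2 (V_op u \<alpha> p \<xi>) \<and> Lp_norm 2 (V_op u \<alpha> p \<xi>) \<le> sqrt (M\<^sup>2 * (Iu + 2))"
    proof (rule memLp_2_dominated)
      fix x
      have "\<bar>V_op u \<alpha> p \<xi> x\<bar> powr 2 = (W x)\<^sup>2 * (abspow (u x) s * \<xi> x)\<^sup>2"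
        unfolding V_eq abs_powr_2 by (simp add: power_mult_distrib)
      also have "\<dots> \<le> M\<^sup>2 * (\<bar>u x\<bar> powr 2 + \<bar>\<xi> x\<bar> powr 2 + \<bar>\<xi> x\<bar> powr 10)"
        using power_mono[OF W_le[of x] abs_ge_zero, of 2] abspow_mult_square_le[OF s]
        by (intro mult_mono) simp_all
      finally show "\<bar>V_op u \<alpha> p \<xi> x\<bar> powr 2
          \<le> M\<^sup>2 * (\<bar>u x\<bar> powr 2 + \<bar>\<xi> x\<bar> powr 2 + \<bar>\<xi> x\<bar> powr 10)" .
      show "(\<integral>x. M\<^sup>2 * (\<bar>u x\<bar> powr 2 + \<bar>\<xi> x\<bar> powr 2 + \<bar>\<xi> x\<bar> powr 10) \<partial>lebesgue) \<le> M\<^sup>2 * (Iu + 2)"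
        using u_facts(2) \<xi>_facts(2-3,5-6) by (simp add: Iu_def mult_left_mono)
    qed (use u_facts(2) \<xi>_facts(2,3) in \<open>simp_all add: V_eq\<close>)
  next
    fix \<xi> \<eta> :: "real^'n \<Rightarrow> real" and a b :: real
    show "AE x in lebesgue. V_op u \<alpha> p (\<lambda>y. a * \<xi> y + b * \<eta> y) x
        = a * V_op u \<alpha> p \<xi> x + b * V_op u \<alpha> p \<eta> x"
      by (intro AE_I2) (simp add: V_eq distrib_left mult.left_commute)
  next
    fix \<xi> :: "real^'n \<Rightarrow> real" and c :: real
    show "V_op u \<alpha> p (\<lambda>y. c * \<xi> y) = (\<lambda>x. c * V_op u \<alpha> p \<xi> x)"
      by (simp add: V_eq mult.left_commute)
  qed
qed

lemma bounded_linear_A_op: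
  fixes u :: "real^'n \<Rightarrow> real"
  assumes card: "CARD('n) \<in> {3, 4, 5}" and \<alpha>: "0 < \<alpha>" "4/3 * \<alpha> < CARD('n)"
    and p: "2 \<le> p" "p \<le> 9/4" and u: "u \<in> Xd"
  shows "bounded_linear_X_L2rad (A_op u \<alpha> p)"
proof -
  note u_facts = XdD[OF u]
  have [measurable]: "u \<in> borel_measurable lebesgue" by (rule u_facts(1))
  define s where "s = p - 2"
  have s: "0 \<le> s" "s \<le> 1/4" using p by (simp_all add: s_def)
  define F where "F \<xi> = (\<lambda>y. abspow (u y) s * u y * \<xi> y)" for \<xi> :: "real^'n \<Rightarrow> real"
  define C where "C = (\<integral>z. indicator (ball 0 1) z * norm (z::real^'n) powr (-(4/3 * \<alpha>)) \<partial>lborel)"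
  have A_eq: "A_op u \<alpha> p \<xi> = (\<lambda>x. rconv \<alpha> (F \<xi>) x * (abspow (u x) s * u x))" for \<xi>
    by (simp add: fun_eq_iff A_op_def F_def s_def)
  have F_measurable: "F \<xi> \<in> borel_measurable lebesgue" if "\<xi> \<in> Xd" for \<xi>
    using XdD(1)[OF that] unfolding F_def by measurable
  have conv: "integrable lebesgue (\<lambda>y. norm (x - y) powr (-\<alpha>) * F \<xi> y)"
    "\<bar>rconv \<alpha> (F \<xi>) x\<bar>
      \<le> (\<integral>y. 2 * (\<bar>u y\<bar> powr 2 + \<bar>u y\<bar> powr 10 + \<bar>\<xi> y\<bar> powr 2 + \<bar>\<xi> y\<bar> powr 10) \<partial>lebesgue) + C"
    if "\<xi> \<in> Xd" for \<xi> x
    unfolding F_def C_def by (rule rconv_abspow_mult_bounded[OF \<alpha> s u that])+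
  show ?thesis
  proof (rule bounded_linear_X_L2radI)
    fix \<xi> :: "real^'n \<Rightarrow> real" assume \<xi>: "\<xi> \<in> Xd"
    have "radial_ae (F \<xi>)"
      using u_facts(4) XdD(4)[OF \<xi>] unfolding F_def
      by (rule radial_ae_comp2[where h = "\<lambda>t w. abspow t s * t * w"])
    then have "radial (rconv \<alpha> (F \<xi>))"
      using card F_measurable[OF \<xi>] by (intro radial_rconv)
    from radial_imp_radial_ae[OF this] u_facts(4) show "radial_ae (A_op u \<alpha> p \<xi>)"
      unfolding A_eq
      by (rule radial_ae_comp2[where h = "\<lambda>w t. w * (abspow t s * t)"])
    fix \<eta> :: "real^'n \<Rightarrow> real" and a b :: real assume \<eta>: "\<eta> \<in> Xd"
    have "F (\<lambda>y. a * \<xi> y + b * \<eta> y) = (\<lambda>y. a * F \<xi> y + b * F \<eta> y)"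
      by (simp add: fun_eq_iff F_def algebra_simps)
    then show "AE x in lebesgue. A_op u \<alpha> p (\<lambda>y. a * \<xi> y + b * \<eta> y) x
        = a * A_op u \<alpha> p \<xi> x + b * A_op u \<alpha> p \<eta> x"
      using conv(1)[OF \<xi>] conv(1)[OF \<eta>] by (simp add: A_eq rconv_linear algebra_simps)
  next
    fix \<xi> :: "real^'n \<Rightarrow> real" and c
    have "F (\<lambda>y. c * \<xi> y) = (\<lambda>y. c * F \<xi> y)" by (simp add: fun_eq_iff F_def)
    then show "A_op u \<alpha> p (\<lambda>y. c * \<xi> y) = (\<lambda>x. c * A_op u \<alpha> p \<xi> x)"
      by (simp add: A_eq rconv_cmult mult.assoc)
  next
    fix \<xi> :: "real^'n \<Rightarrow> real" assume \<xi>: "\<xi> \<in> Xd" and "Xnorm \<xi> \<le> 1"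
    note \<xi>_facts = XdD[OF \<xi>] Xnorm_le_1_integral_le_1[OF this(2)]
    define Iu where "Iu = (\<integral>x. \<bar>u x\<bar> powr 2 + \<bar>u x\<bar> powr 10 \<partial>lebesgue)"
    define M where "M = 2 * (Iu + 2) + C"
    have "(\<integral>y. 2 * (\<bar>u y\<bar> powr 2 + \<bar>u y\<bar> powr 10 + \<bar>\<xi> y\<bar> powr 2 + \<bar>\<xi> y\<bar> powr 10) \<partial>lebesgue)
        \<le> 2 * (Iu + 2)"
      using u_facts(2,3) \<xi>_facts(2,3,5,6) by (simp add: Iu_def)
    then have A_le: "\<bar>rconv \<alpha> (F \<xi>) x\<bar> \<le> M" for x
      using conv(2)[OF \<xi>, of x] by (simp add: M_def)
    show "memLp 2 (A_op u \<alpha> p \<xi>) \<and> Lp_norm 2 (A_op u \<alpha> p \<xi>) \<le> sqrt (M\<^sup>2 * Iu)"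
    proof (rule memLp_2_dominated)
      fix x
      have "\<bar>A_op u \<alpha> p \<xi> x\<bar> powr 2 = (rconv \<alpha> (F \<xi>) x)\<^sup>2 * (abspow (u x) s * u x)\<^sup>2"
        unfolding A_eq abs_powr_2 by (simp add: power_mult_distrib)
      also have "\<dots> \<le> M\<^sup>2 * (\<bar>u x\<bar> powr 2 + \<bar>u x\<bar> powr 10)"
        using power_mono[OF A_le[of x] abs_ge_zero, of 2] abspow_mult_self_square_le[of s] s
        by (intro mult_mono) simp_all
      finally show "\<bar>A_op u \<alpha> p \<xi> x\<bar> powr 2 \<le> M\<^sup>2 * (\<bar>u x\<bar> powr 2 + \<bar>u x\<bar> powr 10)" .
      show "A_op u \<alpha> p \<xi> \<in> borel_measurable lebesgue"
        unfolding A_eq using borel_measurable_rconv[OF F_measurable[OF \<xi>]] by measurable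
    qed (use u_facts(2,3) in \<open>simp_all add: Iu_def\<close>)
  qed
qed

theorem lemmaC1:
  assumes "CARD('n::finite) \<in> {3, 4, 5}"
  shows "\<exists>\<delta>>0. \<forall>\<alpha> p.
           \<alpha> \<in> {real CARD('n) - 2 - \<delta> .. real CARD('n) - 2 + \<delta>} \<and> p \<in> {2 .. 2 + \<delta>} \<longrightarrow>
           (\<forall>u :: real^'n \<Rightarrow> real. u \<in> Xd \<longrightarrow>
              bounded_linear_X_L2rad (V_op u \<alpha> p) \<and> bounded_linear_X_L2rad (A_op u \<alpha> p))"
proof (intro exI[of _ "1/10"] conjI allI impI)
  fix \<alpha> p :: real and u :: "real^'n \<Rightarrow> real"
  assume "\<alpha> \<in> {real CARD('n) - 2 - 1/10 .. real CARD('n) - 2 + 1/10} \<and> p \<in> {2 .. 2 + 1/10}"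
    and u: "u \<in> Xd"
  moreover have "3 \<le> real CARD('n)" "real CARD('n) \<le> 5" using assms by auto
  ultimately have "0 < \<alpha>" "4/3 * \<alpha> < CARD('n)" "2 \<le> p" "p \<le> 9/4" by auto
  then show "bounded_linear_X_L2rad (V_op u \<alpha> p)" "bounded_linear_X_L2rad (A_op u \<alpha> p)"
    using bounded_linear_V_op[OF assms _ _ _ _ u] bounded_linear_A_op[OF assms _ _ _ _ u] by simp_all
qed simp

end
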